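(* Let $s\ge2$, $\eta>0$, and let $z\in\mathbb{R}_{\ge0}^s$ with $\sum_j z_j>0$ whose non-zero entries are not all equal. Let $\tilde z_k=\max\big(z_k-\eta\frac{\partial\mathcal{H}}{\partial z_k}(z),0\big)$ (with $\tilde z_k=0$ when $z_k=0$). If $i$ is an index of a smallest non-zero entry of $z$ then $\frac{\partial\mathcal{H}}{\partial z_i}(z)>0$ and $\tilde z_i<z_i$; if $k$ is an index of a largest entry of $z$ then $\frac{\partial\mathcal{H}}{\partial z_k}(z)<0$ and $\tilde z_k>z_k$.
   Context: $\mathcal{H}(z)=-\sum_i \frac{z_i}{\sum_j z_j}\log\frac{z_i}{\sum_j z_j}$ with $0\log0=0$; for $z_k>0$ the gradient is the partial derivative, and for $z_k=0$ it is regarded as $+\infty$. *)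

theory Defs
  imports "HOL-Analysis.Analysis"
begin

text \<open>Vectors in R^s are modelled as functions nat => real restricted to indices {..<s}.\<close>

definition plogp :: "real \<Rightarrow> real" where
  "plogp x = (if x = 0 then 0 else x * ln x)"

definition entropy :: "nat \<Rightarrow> (nat \<Rightarrow> real) \<Rightarrow> real" where
  "entropy s z = - (\<Sum>i<s. plogp (z i / (\<Sum>j<s. z j)))"

text \<open>Partial derivative of the entropy with respect to coordinate k at z
  (meaningful when z k > 0; the gradient is regarded as +infinity when z k = 0,
  which only matters through the update rule below).\<close>
definition entropy_partial :: "nat \<Rightarrow> (nat \<Rightarrow> real) \<Rightarrow> nat \<Rightarrow> real" where
  "entropy_partial s z k = deriv (\<lambda>t. entropy s (z(k := t))) (z k)"

definition entropy_step :: "nat \<Rightarrow> real \<Rightarrow> (nat \<Rightarrow> real) \<Rightarrow> nat \<Rightarrow> real" where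
  "entropy_step s \<eta> z k =
     (if z k = 0 then 0 else max (z k - \<eta> * entropy_partial s z k) 0)"

end

theory Submission
  imports Defs
begin

text \<open>Writing \<open>S = \<Sum>\<^sub>j z\<^sub>j\<close>, one has \<open>H(z) = ln S - (\<Sum>\<^sub>j z\<^sub>j ln z\<^sub>j) / S\<close>, and differentiating in a
  positive coordinate \<open>z\<^sub>k\<close> gives \<open>\<partial>H/\<partial>z\<^sub>k = (\<Sum>\<^sub>j z\<^sub>j ln (z\<^sub>j / z\<^sub>k)) / S\<^sup>2\<close>. At a smallest non-zero
  entry every summand is \<open>\<ge> 0\<close>, and the summand of a strictly larger entry is \<open>> 0\<close>; at a largest
  entry every summand is \<open>\<le> 0\<close>, and that of a strictly smaller non-zero entry is \<open>< 0\<close>.\<close>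

lemma sum_fun_upd:
  fixes g :: "'a \<Rightarrow> 'b::ab_group_add"
  assumes "finite A" "k \<in> A"
  shows "sum (g(k := t)) A = sum g A - g k + t"
proof -
  have "sum (g(k := t)) A = t + sum (g(k := t)) (A - {k})"
    using assms by (simp add: sum.remove)
  also have "sum (g(k := t)) (A - {k}) = sum g (A - {k})"
    by (intro sum.cong) auto
  finally show ?thesis
    using assms by (simp add: sum_diff1)
qed

lemma plogp_divide:
  assumes "x \<ge> 0" "S > 0"
  shows "plogp (x / S) = plogp x / S - x * ln S / S"
  using assms by (cases "x = 0") (simp_all add: plogp_def ln_div field_simps)

lemma plogp_minus_mult_ln:
  assumes "x \<ge> 0" "y > 0"
  shows "plogp x - x * ln y = x * ln (x / y)"
  using assms by (cases "x = 0") (simp_all add: plogp_def ln_div algebra_simps)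

lemma entropy_eq:
  assumes "\<forall>j<s. w j \<ge> 0" "(\<Sum>j<s. w j) > 0"
  shows "entropy s w = ln (\<Sum>j<s. w j) - (\<Sum>j<s. plogp (w j)) / (\<Sum>j<s. w j)"
proof -
  let ?S = "\<Sum>j<s. w j"
  have "(\<Sum>i<s. plogp (w i / ?S)) = (\<Sum>i<s. plogp (w i) / ?S - w i * ln ?S / ?S)"
    using assms by (intro sum.cong refl plogp_divide) auto
  also have "\<dots> = (\<Sum>i<s. plogp (w i)) / ?S - ln ?S * (?S / ?S)"
    by (simp add: sum_subtractf sum_divide_distrib[symmetric] sum_distrib_right[symmetric]
        algebra_simps)
  also have "\<dots> = (\<Sum>i<s. plogp (w i)) / ?S - ln ?S"
    using assms by simp
  finally show ?thesis
    unfolding entropy_def by simp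
qed

lemma entropy_partial_eq:
  assumes k: "k < s" and zk: "z k > 0" and nonneg: "\<forall>j<s. z j \<ge> 0"
  shows "entropy_partial s z k = (\<Sum>j<s. z j * ln (z j / z k)) / (\<Sum>j<s. z j)\<^sup>2"
proof -
  define S where "S = (\<Sum>j<s. z j)"
  define A where "A = S - z k"
  define C where "C = (\<Sum>j<s. plogp (z j)) - plogp (z k)"
  define f where "f t = ln (A + t) - (C + t * ln t) / (A + t)" for t
  define f' where "f' = 1 / S - ((ln (z k) + 1) * S - (C + z k * ln (z k))) / S\<^sup>2"
  have "z k \<le> S"
    unfolding S_def using k nonneg by (intro member_le_sum) auto
  then have A: "A \<ge> 0"
    unfolding A_def by simp
  have entropy_upd: "entropy s (z(k := t)) = f t" if "t \<in> {0<..}" for t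
  proof -
    have t: "t > 0"
      using that by simp
    have sum_upd: "(\<Sum>j<s. (z(k := t)) j) = A + t"
      using sum_fun_upd[of "{..<s}" k z t] k unfolding A_def S_def by simp
    have "(\<Sum>j<s. plogp ((z(k := t)) j)) = (\<Sum>j<s. ((plogp \<circ> z)(k := plogp t)) j)"
      by (intro sum.cong) auto
    also have "\<dots> = C + t * ln t"
      using sum_fun_upd[of "{..<s}" k "plogp \<circ> z" "plogp t"] k t
      unfolding C_def by (simp add: plogp_def)
    finally show ?thesis
      using entropy_eq[of s "z(k := t)"] nonneg t A sum_upd unfolding f_def by simp
  qed
  have "(f has_real_derivative f') (at (z k))"
    unfolding f_def f'_def A_def using zk A
    by (auto intro!: derivative_eq_intros simp: A_def field_simps power2_eq_square)
  then have "((\<lambda>t. entropy s (z(k := t))) has_real_derivative f') (at (z k))"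
    by (rule has_field_derivative_transform_within_open[of _ _ _ "{0<..}"])
      (use zk entropy_upd in auto)
  then have "entropy_partial s z k = f'"
    unfolding entropy_partial_def by (rule DERIV_imp_deriv)
  also have "f' = (\<Sum>j<s. plogp (z j) - z j * ln (z k)) / S\<^sup>2"
  proof -
    have "(\<Sum>j<s. plogp (z j) - z j * ln (z k)) = C + z k * ln (z k) - S * ln (z k)"
      unfolding C_def S_def using zk by (simp add: sum_subtractf sum_distrib_right plogp_def)
    then show ?thesis
      unfolding f'_def using zk \<open>z k \<le> S\<close> by (simp add: field_simps power2_eq_square)
  qed
  also have "\<dots> = (\<Sum>j<s. z j * ln (z j / z k)) / S\<^sup>2"
    using nonneg zk by (simp add: plogp_minus_mult_ln)
  finally show ?thesis
    unfolding S_def .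
qed

lemma entropy_partial_pos_at_min:
  assumes "i < s" "z i > 0" "\<forall>j<s. z j \<ge> 0"
    and "\<forall>j<s. z j \<noteq> 0 \<longrightarrow> z i \<le> z j"
    and "c < s" "z c > z i"
  shows "entropy_partial s z i > 0"
proof -
  have "z j * ln (z j / z i) \<ge> 0" if "j < s" for j
    using that assms by (cases "z j = 0") (auto intro!: mult_nonneg_nonneg)
  moreover have "z c * ln (z c / z i) > 0"
    using assms by (auto intro!: mult_pos_pos)
  ultimately have "(\<Sum>j<s. z j * ln (z j / z i)) > 0"
    using assms by (intro sum_pos2[of _ c]) auto
  moreover have "(\<Sum>j<s. z j) > 0"
    using assms by (intro sum_pos2[of _ i]) auto
  ultimately show ?thesis
    using assms by (simp add: entropy_partial_eq)
qed

lemma entropy_partial_neg_at_max: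
  assumes "k < s" "z k > 0" "\<forall>j<s. z j \<ge> 0"
    and "\<forall>j<s. z j \<le> z k"
    and "c < s" "z c > 0" "z c < z k"
  shows "entropy_partial s z k < 0"
proof -
  have "z j * ln (z j / z k) \<le> 0" if "j < s" for j
    using that assms by (cases "z j = 0") (auto intro!: mult_nonneg_nonpos)
  moreover have "z c * ln (z c / z k) < 0"
    using assms by (auto intro!: mult_pos_neg)
  ultimately have "(\<Sum>j<s. z j * ln (z j / z k)) < 0"
    using assms sum_pos2[of "{..<s}" c "\<lambda>j. - (z j * ln (z j / z k))"]
    by (simp add: sum_negf)
  moreover have "(\<Sum>j<s. z j) > 0"
    using assms by (intro sum_pos2[of _ k]) auto
  ultimately show ?thesis
    using assms by (simp add: entropy_partial_eq divide_neg_pos)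
qed

lemma exists_greater_than_min_nonzero:
  fixes z :: "nat \<Rightarrow> 'a::{linorder,zero}"
  assumes "\<exists>a<s. \<exists>b<s. z a \<noteq> 0 \<and> z b \<noteq> 0 \<and> z a \<noteq> z b"
    and "\<forall>j<s. z j \<noteq> 0 \<longrightarrow> z i \<le> z j"
  shows "\<exists>c<s. z i < z c"
  using assms by (metis order_le_neq_trans)

lemma exists_nonzero_less_than_max:
  fixes z :: "nat \<Rightarrow> 'a::{linorder,zero}"
  assumes "\<exists>a<s. \<exists>b<s. z a \<noteq> 0 \<and> z b \<noteq> 0 \<and> z a \<noteq> z b"
    and "\<forall>j<s. z j \<le> z k"
  shows "\<exists>c<s. z c \<noteq> 0 \<and> z c < z k"
  using assms by (metis order_le_neq_trans)

lemma entropy_step_less: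
  assumes "z k > 0" "\<eta> > 0" "entropy_partial s z k > 0"
  shows "entropy_step s \<eta> z k < z k"
  using assms by (simp add: entropy_step_def)

lemma entropy_step_greater:
  assumes "z k > 0" "\<eta> > 0" "entropy_partial s z k < 0"
  shows "entropy_step s \<eta> z k > z k"
proof -
  have "\<eta> * entropy_partial s z k < 0"
    using assms by (simp add: mult_pos_neg)
  then show ?thesis
    using assms by (simp add: entropy_step_def)
qed

theorem corollary2:
  fixes s :: nat and \<eta> :: real and z :: "nat \<Rightarrow> real"
  assumes hs: "s \<ge> 2"
    and h\<eta>: "\<eta> > 0"
    and hnonneg: "\<forall>j<s. z j \<ge> 0"
    and hsum: "(\<Sum>j<s. z j) > 0"
    and hnoteq: "\<exists>a<s. \<exists>b<s. z a \<noteq> 0 \<and> z b \<noteq> 0 \<and> z a \<noteq> z b"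
  shows "(\<forall>i<s. (z i \<noteq> 0 \<and> (\<forall>j<s. z j \<noteq> 0 \<longrightarrow> z i \<le> z j)) \<longrightarrow>
            entropy_partial s z i > 0 \<and> entropy_step s \<eta> z i < z i)
       \<and> (\<forall>k<s. (\<forall>j<s. z j \<le> z k) \<longrightarrow>
            entropy_partial s z k < 0 \<and> entropy_step s \<eta> z k > z k)"
proof (intro conjI allI impI; (elim conjE)?)
  fix i assume i: "i < s" "z i \<noteq> 0" "\<forall>j<s. z j \<noteq> 0 \<longrightarrow> z i \<le> z j"
  have zi: "z i > 0"
    using i hnonneg by (simp add: order_le_neq_trans)
  obtain c where "c < s" "z i < z c"
    using exists_greater_than_min_nonzero[OF hnoteq i(3)] by blast
  then have "entropy_partial s z i > 0"
    using i zi hnonneg by (intro entropy_partial_pos_at_min) auto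
  then show "entropy_partial s z i > 0" "entropy_step s \<eta> z i < z i"
    using zi h\<eta> by (simp_all add: entropy_step_less)
next
  fix k assume k: "k < s" "\<forall>j<s. z j \<le> z k"
  obtain c where c: "c < s" "z c \<noteq> 0" "z c < z k"
    using exists_nonzero_less_than_max[OF hnoteq k(2)] by blast
  have "z c > 0"
    using c hnonneg by (simp add: order_le_neq_trans)
  with c have "z k > 0"
    by simp
  then have "entropy_partial s z k < 0"
    using k c hnonneg by (intro entropy_partial_neg_at_max) auto
  then show "entropy_partial s z k < 0" "entropy_step s \<eta> z k > z k"
    using \<open>z k > 0\<close> h\<eta> by (simp_all add: entropy_step_greater)
qed

end
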